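(* Let $F\le \mathrm{SL}_2(\mathbb{Z})$ be a free group with free basis $s_1,\dots,s_d$, and let $S=\{s_1^{\pm1},\dots,s_d^{\pm1}\}$. Let $p$ be a prime such that the reduction map $\pi_p:\mathrm{SL}_2(\mathbb{Z})\to\mathrm{SL}_2(\mathbb{F}_p)$ is injective on $S$, and identify $S$ with $\pi_p(S)$. Let $\|\cdot\|$ be a norm on $M_2(\mathbb{R})$ satisfying $\|X\|\ge\|X\|_\infty$ for all $X\in M_2(\mathbb{R})$, let \[\eta=\sup_{g,h\in\mathrm{SL}_2(\mathbb{Z})}\frac{\|gh\|}{\|g\|\,\|h\|},\] assume $\eta<\infty$, and let $M=\max_{s\in S}\|s\|$. If $\mathfrak g$ is the girth of $\mathrm{Cay}(\mathrm{SL}_2(\mathbb{F}_p),S)$, then \[(\eta M)^{\lceil \mathfrak g/2\rceil}\ \ge\ \frac{\eta\, p}{2}.\]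
   Context: $\|X\|_\infty$ denotes the maximum of the absolute values of the entries of the matrix $X$. For a group $G$ and symmetric $T=T^{-1}\subseteq G$, $\mathrm{Cay}(G,T)$ is the graph on $G$ with edges $\{g,gt\}$, $g\in G$, $t\in T$; its girth is the smallest $k\ge1$ for which there exist $t_1,\dots,t_k\in T$ with $t_it_{i+1}\ne e$ for all $1\le i<k$ and $t_1\cdots t_k=e$. *)

theory Defs
  imports "HOL-Analysis.Analysis"
begin

definition SL2Z :: "(int^2^2) set" where
  "SL2Z = {X. det X = 1}"

definition sl2_inv :: "int^2^2 \<Rightarrow> int^2^2" where
  "sl2_inv A = (\<chi> i j.
      if i = 1 \<and> j = 1 then A$2$2
      else if i = 1 \<and> j = 2 then - A$1$2
      else if i = 2 \<and> j = 1 then - A$2$1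
      else A$1$1)"

text \<open>Words in the letters s_i^{+1} (True) and s_i^{-1} (False).\<close>
definition letter :: "(nat \<Rightarrow> int^2^2) \<Rightarrow> nat \<times> bool \<Rightarrow> int^2^2" where
  "letter s l = (if snd l then s (fst l) else sl2_inv (s (fst l)))"

definition word_prod :: "(nat \<Rightarrow> int^2^2) \<Rightarrow> (nat \<times> bool) list \<Rightarrow> int^2^2" where
  "word_prod s w = foldr (\<lambda>l A. letter s l ** A) w (mat 1)"

definition reduced_word :: "(nat \<times> bool) list \<Rightarrow> bool" where
  "reduced_word w = (\<forall>i. Suc i < length w \<longrightarrow>
       \<not> (fst (w ! i) = fst (w ! Suc i) \<and> snd (w ! i) \<noteq> snd (w ! Suc i)))"

text \<open>s_0,...,s_{d-1} in SL_2(Z) form a free basis of the subgroup they generate: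
  no nonempty reduced word in them evaluates to the identity.\<close>
definition free_basis :: "nat \<Rightarrow> (nat \<Rightarrow> int^2^2) \<Rightarrow> bool" where
  "free_basis d s = ((\<forall>i<d. s i \<in> SL2Z) \<and>
     (\<forall>w. w \<noteq> [] \<and> (\<forall>l\<in>set w. fst l < d) \<and> reduced_word w \<longrightarrow> word_prod s w \<noteq> mat 1))"

definition sym_gens :: "nat \<Rightarrow> (nat \<Rightarrow> int^2^2) \<Rightarrow> (int^2^2) set" where
  "sym_gens d s = {s i | i. i < d} \<union> {sl2_inv (s i) | i. i < d}"

text \<open>Reduction mod p: entries reduced into {0..p-1}; SL_2(F_p) is modelled by such
  representatives, multiplication being reduction of the integer product.\<close>
definition red_p :: "int \<Rightarrow> int^2^2 \<Rightarrow> int^2^2" where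
  "red_p p X = (\<chi> i j. X$i$j mod p)"

definition mat_list_prod :: "(int^2^2) list \<Rightarrow> int^2^2" where
  "mat_list_prod xs = foldr (**) xs (mat 1)"

text \<open>A non-backtracking closed walk of length k in Cay(SL_2(F_p), T): t_1..t_k in T,
  t_i t_{i+1} \<noteq> e, t_1 \<cdots> t_k = e (all computed in SL_2(F_p)).\<close>
definition cay_cycle :: "int \<Rightarrow> (int^2^2) set \<Rightarrow> nat \<Rightarrow> bool" where
  "cay_cycle p T k = (\<exists>t :: nat \<Rightarrow> int^2^2.
      (\<forall>i<k. t i \<in> T) \<and>
      (\<forall>i. Suc i < k \<longrightarrow> red_p p (t i ** t (Suc i)) \<noteq> mat 1) \<and>
      red_p p (mat_list_prod (map t [0..<k])) = mat 1)"

definition is_cay_girth :: "int \<Rightarrow> (int^2^2) set \<Rightarrow> nat \<Rightarrow> bool" where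
  "is_cay_girth p T g = (1 \<le> g \<and> cay_cycle p T g \<and> (\<forall>k. 1 \<le> k \<and> k < g \<longrightarrow> \<not> cay_cycle p T k))"

definition to_real_mat :: "int^2^2 \<Rightarrow> real^2^2" where
  "to_real_mat X = (\<chi> i j. real_of_int (X$i$j))"

text \<open>N is a norm on M_2(R) (given as a function, since the type carries a fixed norm).\<close>
definition is_norm :: "(real^2^2 \<Rightarrow> real) \<Rightarrow> bool" where
  "is_norm N = ((\<forall>x. N x = 0 \<longleftrightarrow> x = 0) \<and> (\<forall>c x. N (c *\<^sub>R x) = \<bar>c\<bar> * N x) \<and>
     (\<forall>x y. N (x + y) \<le> N x + N y))"

end

theory Submission
  imports Defs
begin

text \<open>Lift a closed non-backtracking walk of length \<open>g\<close> in the Cayley graph of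
  \<open>SL\<^sub>2(\<bbbF>\<^sub>p)\<close> to a word \<open>W = u\<^sub>1 \<cdots> u\<^sub>g\<close> in the generators; since the \<open>s\<^sub>i\<close> are free, \<open>W \<noteq> 1\<close>,
  while \<open>W \<equiv> 1 (mod p)\<close>. Cutting \<open>W = A C\<close> with \<open>A\<close> of length \<open>\<lceil>g/2\<rceil>\<close>, the matrices \<open>A\<close> and
  \<open>C\<^sup>-\<^sup>1\<close> are distinct but congruent mod \<open>p\<close>, so some entry of one of them is at least
  \<open>p/2\<close> in absolute value. Both are products of at most \<open>\<lceil>g/2\<rceil>\<close> generators, whose norms
  are bounded by submultiplicativity up to the factor \<open>\<eta>\<close>.\<close>

lemma mat2_eq_iff:
  "(X::'a^2^2) = Y \<longleftrightarrow> X$1$1 = Y$1$1 \<and> X$1$2 = Y$1$2 \<and> X$2$1 = Y$2$1 \<and> X$2$2 = Y$2$2"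
  by (auto simp: vec_eq_iff forall_2)

lemma mat2_mult_nth:
  "((X::'a::semiring_1^2^2) ** Y)$i$j = X$i$1 * Y$1$j + X$i$2 * Y$2$j"
  by (simp add: matrix_matrix_mult_def sum_2)

lemma mat2_one_nth:
  "(mat 1 :: 'a::zero_neq_one^2^2)$1$1 = 1" "(mat 1 :: 'a::zero_neq_one^2^2)$2$2 = 1"
  "(mat 1 :: 'a::zero_neq_one^2^2)$1$2 = 0" "(mat 1 :: 'a::zero_neq_one^2^2)$2$1 = 0"
  by (auto simp: mat_def)

lemma sl2_inv_nth:
  "sl2_inv A $1$1 = A$2$2" "sl2_inv A $1$2 = - A$1$2"
  "sl2_inv A $2$1 = - A$2$1" "sl2_inv A $2$2 = A$1$1"
  by (auto simp: sl2_inv_def)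

lemma SL2Z_iff: "X \<in> SL2Z \<longleftrightarrow> X$1$1 * X$2$2 - X$1$2 * X$2$1 = 1"
  by (simp add: SL2Z_def det_2)

lemma SL2Z_one: "mat 1 \<in> SL2Z"
  by (simp add: SL2Z_def)

lemma SL2Z_mult: "X \<in> SL2Z \<Longrightarrow> Y \<in> SL2Z \<Longrightarrow> X ** Y \<in> SL2Z"
  by (simp add: SL2Z_def det_mul)

lemma SL2Z_sl2_inv: "X \<in> SL2Z \<Longrightarrow> sl2_inv X \<in> SL2Z"
  by (simp add: SL2Z_iff sl2_inv_nth algebra_simps)

lemma sl2_inv_right: "X \<in> SL2Z \<Longrightarrow> X ** sl2_inv X = mat 1"
  by (simp add: mat2_eq_iff mat2_mult_nth sl2_inv_nth mat2_one_nth SL2Z_iff algebra_simps)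

lemma sl2_inv_left: "X \<in> SL2Z \<Longrightarrow> sl2_inv X ** X = mat 1"
  by (simp add: mat2_eq_iff mat2_mult_nth sl2_inv_nth mat2_one_nth SL2Z_iff algebra_simps)

lemma sl2_inv_sl2_inv [simp]: "sl2_inv (sl2_inv X) = X"
  by (simp add: mat2_eq_iff sl2_inv_nth)

lemma sl2_inv_mult: "sl2_inv (X ** Y) = sl2_inv Y ** sl2_inv X"
  by (simp add: mat2_eq_iff mat2_mult_nth sl2_inv_nth algebra_simps)

lemma sl2_inv_one [simp]: "sl2_inv (mat 1) = mat 1"
  by (simp add: mat2_eq_iff sl2_inv_nth mat2_one_nth)

lemma SL2Z_nonzero_entry:
  assumes "X \<in> SL2Z"
  obtains i j where "X$i$j \<noteq> 0"
  using assms by (force simp: SL2Z_iff)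

lemma red_p_mult: "red_p p (X ** Y) = red_p p (red_p p X ** red_p p Y)"
proof -
  have "(\<Sum>k\<in>UNIV. X$i$k * Y$k$j) mod p = (\<Sum>k\<in>UNIV. (X$i$k mod p) * (Y$k$j mod p)) mod p"
    for i j
  proof -
    have "(\<Sum>k\<in>UNIV. X$i$k * Y$k$j) mod p = (\<Sum>k\<in>UNIV. X$i$k * Y$k$j mod p) mod p"
      by (rule mod_sum_eq[symmetric])
    also have "\<dots> = (\<Sum>k\<in>UNIV. (X$i$k mod p) * (Y$k$j mod p) mod p) mod p"
      by (simp only: mod_mult_eq)
    also have "\<dots> = (\<Sum>k\<in>UNIV. (X$i$k mod p) * (Y$k$j mod p)) mod p"
      by (rule mod_sum_eq)
    finally show ?thesis .
  qed
  then show ?thesis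
    by (simp add: red_p_def matrix_matrix_mult_def vec_eq_iff)
qed

lemma red_p_red_p [simp]: "red_p p (red_p p X) = red_p p X"
  by (simp add: red_p_def mat2_eq_iff)

lemma red_p_one: "1 < p \<Longrightarrow> red_p p (mat 1) = mat 1"
  by (simp add: red_p_def mat2_eq_iff mat2_one_nth)

lemma red_p_eq_sl2_inv_if_mult_trivial:
  assumes "red_p p (A ** C) = mat 1" and "C \<in> SL2Z" and "1 < p"
  shows "red_p p A = red_p p (sl2_inv C)"
proof -
  have "red_p p A = red_p p ((A ** C) ** sl2_inv C)"
    using assms(2) by (simp add: matrix_mul_assoc[symmetric] sl2_inv_right matrix_mul_rid)
  also have "\<dots> = red_p p (red_p p (sl2_inv C))"
    by (subst red_p_mult) (simp add: assms(1) matrix_mul_lid)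
  finally show ?thesis by simp
qed

lemma congruent_distinct_entry_ge:
  assumes "A \<noteq> B" and "red_p p A = red_p p B" and "0 < p"
  obtains i j where "p \<le> \<bar>A$i$j\<bar> + \<bar>B$i$j\<bar>"
proof -
  obtain i j where ne: "A$i$j \<noteq> B$i$j"
    using assms(1) by (meson vec_eq_iff)
  have "A$i$j mod p = B$i$j mod p"
    using arg_cong[OF assms(2), of "\<lambda>X. X$i$j"] by (simp add: red_p_def)
  then have "p dvd A$i$j - B$i$j"
    by (simp add: mod_eq_dvd_iff)
  moreover have "A$i$j - B$i$j \<noteq> 0"
    using ne by simp
  ultimately have "\<bar>p\<bar> \<le> \<bar>A$i$j - B$i$j\<bar>"
    by (rule dvd_imp_le_int[rotated])
  then have "p \<le> \<bar>A$i$j - B$i$j\<bar>"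
    using assms(3) by simp
  then show ?thesis
    by (intro that[of i j]) linarith
qed

lemma mat_list_prod_append:
  "mat_list_prod (xs @ ys) = mat_list_prod xs ** mat_list_prod ys"
  by (induction xs) (auto simp: mat_list_prod_def matrix_mul_assoc matrix_mul_lid)

lemma mat_list_prod_SL2Z: "set xs \<subseteq> SL2Z \<Longrightarrow> mat_list_prod xs \<in> SL2Z"
  by (induction xs) (auto simp: mat_list_prod_def SL2Z_one SL2Z_mult)

lemma sl2_inv_mat_list_prod:
  "sl2_inv (mat_list_prod xs) = mat_list_prod (rev (map sl2_inv xs))"
proof (induction xs)
  case (Cons x xs)
  have "sl2_inv (mat_list_prod (x # xs)) = sl2_inv (mat_list_prod xs) ** sl2_inv x"
    by (simp add: mat_list_prod_def sl2_inv_mult)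
  also have "\<dots> = mat_list_prod (rev (map sl2_inv xs) @ [sl2_inv x])"
    by (simp only: Cons mat_list_prod_append) (simp add: mat_list_prod_def matrix_mul_rid)
  finally show ?case
    by simp
qed (simp add: mat_list_prod_def)

lemma red_p_mat_list_prod:
  "red_p p (mat_list_prod xs) = red_p p (mat_list_prod (map (red_p p) xs))"
proof (induction xs)
  case (Cons x xs)
  have "red_p p (mat_list_prod (x # xs)) = red_p p (red_p p x ** red_p p (mat_list_prod xs))"
    unfolding mat_list_prod_def by (simp add: red_p_mult[of p x])
  also have "\<dots> = red_p p (red_p p (red_p p x) ** red_p p (mat_list_prod (map (red_p p) xs)))"
    by (simp add: Cons)
  also have "\<dots> = red_p p (mat_list_prod (map (red_p p) (x # xs)))"
    unfolding mat_list_prod_def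
    by (simp add: red_p_mult[of p "red_p p x" "foldr (**) (map (red_p p) xs) (mat 1)"])
  finally show ?case .
qed simp

lemma word_prod_eq_mat_list_prod: "word_prod s w = mat_list_prod (map (letter s) w)"
  by (simp add: word_prod_def mat_list_prod_def foldr_map comp_def)

lemma sym_gens_subset_SL2Z: "free_basis d s \<Longrightarrow> sym_gens d s \<subseteq> SL2Z"
  by (auto simp: sym_gens_def free_basis_def SL2Z_sl2_inv)

lemma sl2_inv_in_sym_gens: "x \<in> sym_gens d s \<Longrightarrow> sl2_inv x \<in> sym_gens d s"
  by (auto simp: sym_gens_def)

lemma finite_sym_gens: "finite (sym_gens d s)"
proof -
  have "sym_gens d s = s ` {..<d} \<union> (\<lambda>i. sl2_inv (s i)) ` {..<d}"
    by (auto simp: sym_gens_def)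
  then show ?thesis
    by simp
qed

lemma sym_gens_letter: "x \<in> sym_gens d s \<Longrightarrow> \<exists>l. fst l < d \<and> letter s l = x"
  by (auto simp: sym_gens_def letter_def intro: exI[of _ "(_, True)"] exI[of _ "(_, False)"])

lemma letter_mult_opposite:
  assumes "s a \<in> SL2Z" and "b \<noteq> b'"
  shows "letter s (a, b) ** letter s (a, b') = mat 1"
  using assms by (cases b) (auto simp: letter_def sl2_inv_left sl2_inv_right)

lemma free_basis_non_backtracking_prod_ne_one:
  assumes free: "free_basis d s" and "us \<noteq> []" and us: "set us \<subseteq> sym_gens d s"
    and non_backtracking: "\<And>i. Suc i < length us \<Longrightarrow> us ! i ** us ! Suc i \<noteq> mat 1"
  shows "mat_list_prod us \<noteq> mat 1"
proof -
  define w where "w = map (\<lambda>x. SOME l. fst l < d \<and> letter s l = x) us"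
  have w_nth: "fst (w ! i) < d \<and> letter s (w ! i) = us ! i" if "i < length us" for i
  proof -
    have "\<exists>l. fst l < d \<and> letter s l = us ! i"
      using that us by (intro sym_gens_letter) auto
    then have "fst (SOME l. fst l < d \<and> letter s l = us ! i) < d \<and>
        letter s (SOME l. fst l < d \<and> letter s l = us ! i) = us ! i"
      by (rule someI_ex)
    then show ?thesis
      unfolding w_def using that by simp
  qed
  then have "map (letter s) w = us"
    by (simp add: list_eq_iff_nth_eq w_def)
  moreover have "reduced_word w"
    unfolding reduced_word_def
  proof (intro allI impI notI)
    fix i
    assume i: "Suc i < length w" and cancel: "fst (w ! i) = fst (w ! Suc i) \<and> snd (w ! i) \<noteq> snd (w ! Suc i)"
    then obtain a b b' where "w ! i = (a, b)" "w ! Suc i = (a, b')" "b \<noteq> b'"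
      by (metis prod.collapse)
    moreover have "a < d"
      using w_nth[of i] i \<open>w ! i = (a, b)\<close> by (simp add: w_def)
    ultimately have "us ! i ** us ! Suc i = mat 1"
      using w_nth[of i] w_nth[of "Suc i"] i free letter_mult_opposite[of s a b b']
      by (simp add: w_def free_basis_def)
    with non_backtracking[of i] i show False
      by (simp add: w_def)
  qed
  moreover have "w \<noteq> []" "\<forall>l\<in>set w. fst l < d"
    using \<open>us \<noteq> []\<close> w_nth by (auto simp: w_def in_set_conv_nth)
  ultimately show ?thesis
    using free unfolding free_basis_def word_prod_eq_mat_list_prod by metis
qed

lemma cay_cycle_lift:
  assumes free: "free_basis d s" and "1 < p" and "1 \<le> k"
    and "cay_cycle p (red_p p ` sym_gens d s) k"
  obtains us where "length us = k" "set us \<subseteq> sym_gens d s"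
    "mat_list_prod us \<noteq> mat 1" "red_p p (mat_list_prod us) = mat 1"
proof -
  obtain t where t: "\<forall>i<k. t i \<in> red_p p ` sym_gens d s"
    and non_backtracking: "\<forall>i. Suc i < k \<longrightarrow> red_p p (t i ** t (Suc i)) \<noteq> mat 1"
    and closed: "red_p p (mat_list_prod (map t [0..<k])) = mat 1"
    using assms(4) unfolding cay_cycle_def by (elim exE conjE) (rule that)
  have "\<exists>x. i < k \<longrightarrow> x \<in> sym_gens d s \<and> red_p p x = t i" for i
  proof (cases "i < k")
    case True
    with t obtain x where "x \<in> sym_gens d s" "t i = red_p p x"
      by blast
    then show ?thesis
      by auto
  qed simp
  then obtain u where u: "\<forall>i<k. u i \<in> sym_gens d s \<and> red_p p (u i) = t i"
    by metis
  define us where "us = map u [0..<k]"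
  have us_gens: "set us \<subseteq> sym_gens d s"
    using u by (auto simp: us_def)
  have "us \<noteq> []"
    using \<open>1 \<le> k\<close> by (simp add: us_def)
  have "red_p p (mat_list_prod us) = red_p p (mat_list_prod (map (red_p p) us))"
    by (rule red_p_mat_list_prod)
  also have "map (red_p p) us = map t [0..<k]"
    using u by (simp add: us_def)
  finally have "red_p p (mat_list_prod us) = mat 1"
    using closed by simp
  moreover have "mat_list_prod us \<noteq> mat 1"
  proof (rule free_basis_non_backtracking_prod_ne_one[OF free \<open>us \<noteq> []\<close> us_gens])
    fix i
    assume "Suc i < length us"
    then have i: "Suc i < k"
      by (simp add: us_def)
    have "red_p p (t i ** t (Suc i)) = red_p p (u i ** u (Suc i))"
      using u i by (simp add: red_p_mult[of p "u i"])
    then show "us ! i ** us ! Suc i \<noteq> mat 1"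
      using non_backtracking i red_p_one[OF \<open>1 < p\<close>] by (auto simp: us_def nth_append)
  qed
  ultimately show ?thesis
    using us_gens by (intro that[of us]) (simp_all add: us_def)
qed

lemma norm_SL2Z_ge_one:
  assumes entry_le: "\<And>X i j. \<bar>X$i$j\<bar> \<le> N X" and "X \<in> SL2Z"
  shows "1 \<le> N (to_real_mat X)"
proof -
  obtain i j where "X$i$j \<noteq> 0"
    using SL2Z_nonzero_entry[OF \<open>X \<in> SL2Z\<close>] .
  then have "1 \<le> \<bar>to_real_mat X $ i $ j\<bar>"
    by (simp add: to_real_mat_def)
  also have "\<dots> \<le> N (to_real_mat X)"
    by (rule entry_le)
  finally show ?thesis .
qed

locale sl2_norm =
  fixes N :: "real^2^2 \<Rightarrow> real" and \<eta> :: real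
  assumes entry_le_norm: "\<bar>X$i$j\<bar> \<le> N X"
    and norm_mult_le:
      "G \<in> SL2Z \<Longrightarrow> H \<in> SL2Z \<Longrightarrow> N (to_real_mat (G ** H)) \<le> \<eta> * N (to_real_mat G) * N (to_real_mat H)"
begin

lemma norm_nonneg: "0 \<le> N X"
  using entry_le_norm[of X 1 1] by linarith

lemma int_entry_le_norm: "\<bar>real_of_int (X$i$j)\<bar> \<le> N (to_real_mat X)"
  using entry_le_norm[of "to_real_mat X" i j] by (simp add: to_real_mat_def)

lemma eta_pos: "0 < \<eta>"
proof -
  define n where "n = N (to_real_mat (mat 1))"
  have "1 \<le> n"
    unfolding n_def by (rule norm_SL2Z_ge_one[OF entry_le_norm SL2Z_one])
  moreover have "n * 1 \<le> n * (\<eta> * n)"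
    using norm_mult_le[OF SL2Z_one SL2Z_one] by (simp add: n_def matrix_mul_lid mult_ac)
  ultimately have "1 \<le> \<eta> * n"
    by (simp add: mult_le_cancel_left_pos)
  then show ?thesis
    using mult_nonpos_nonneg[of \<eta> n] \<open>1 \<le> n\<close> by linarith
qed

lemma norm_mat_list_prod_le:
  assumes "xs \<noteq> []" and "set xs \<subseteq> SL2Z" and "\<forall>x\<in>set xs. N (to_real_mat x) \<le> M"
  shows "\<eta> * N (to_real_mat (mat_list_prod xs)) \<le> (\<eta> * M) ^ length xs"
  using assms
proof (induction xs rule: list_nonempty_induct)
  case (single x)
  then show ?case
    using eta_pos by (simp add: mat_list_prod_def matrix_mul_rid)
next
  case (cons x xs)
  have x: "x \<in> SL2Z" "N (to_real_mat x) \<le> M"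
    using cons.prems by auto
  have "N (to_real_mat (mat_list_prod (x # xs)))
      \<le> \<eta> * N (to_real_mat x) * N (to_real_mat (mat_list_prod xs))"
    using norm_mult_le[OF x(1) mat_list_prod_SL2Z] cons.prems by (simp add: mat_list_prod_def)
  then have "\<eta> * N (to_real_mat (mat_list_prod (x # xs)))
      \<le> \<eta> * (\<eta> * N (to_real_mat x) * N (to_real_mat (mat_list_prod xs)))"
    using eta_pos by (simp add: mult_left_mono)
  also have "\<dots> = (\<eta> * N (to_real_mat x)) * (\<eta> * N (to_real_mat (mat_list_prod xs)))"
    by simp
  also have "\<dots> \<le> (\<eta> * M) * (\<eta> * M) ^ length xs"
    using cons x eta_pos norm_nonneg[of "to_real_mat x"] norm_nonneg[of "to_real_mat (mat_list_prod xs)"]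
    by (intro mult_mono) auto
  finally show ?case
    by simp
qed

text \<open>If \<open>\<eta> M < 1\<close>, the bound \<open>\<eta> \<le> \<eta> N(x\<^sup>n) \<le> (\<eta> M)\<^sup>n\<close> would fail for large \<open>n\<close>.\<close>

lemma eta_mult_ge_one:
  assumes "x \<in> SL2Z" and "N (to_real_mat x) \<le> M"
  shows "1 \<le> \<eta> * M"
proof (rule ccontr)
  assume "\<not> 1 \<le> \<eta> * M"
  moreover have "0 \<le> \<eta> * M"
    using assms(2) norm_nonneg[of "to_real_mat x"] eta_pos by simp
  ultimately obtain n where n: "(\<eta> * M) ^ n < \<eta>"
    using real_arch_pow_inv[OF eta_pos, of "\<eta> * M"] by (meson not_le)
  define xs where "xs = replicate (Suc n) x"
  have xs: "set xs \<subseteq> SL2Z"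
    using assms(1) by (auto simp: xs_def set_replicate_conv_if)
  then have "\<eta> \<le> \<eta> * N (to_real_mat (mat_list_prod xs))"
    using norm_SL2Z_ge_one[OF entry_le_norm mat_list_prod_SL2Z] eta_pos by simp
  also have "\<dots> \<le> (\<eta> * M) ^ Suc n"
    using norm_mat_list_prod_le[OF _ xs, of M] assms(2) by (simp add: xs_def)
  also have "\<dots> \<le> (\<eta> * M) ^ n"
    using \<open>0 \<le> \<eta> * M\<close> \<open>\<not> 1 \<le> \<eta> * M\<close> by (intro power_decreasing) auto
  finally show False
    using n by simp
qed

lemma norm_mat_list_prod_le_power:
  assumes "xs \<noteq> []" and "set xs \<subseteq> SL2Z" and "\<forall>x\<in>set xs. N (to_real_mat x) \<le> M"
    and "length xs \<le> k"
  shows "\<eta> * N (to_real_mat (mat_list_prod xs)) \<le> (\<eta> * M) ^ k"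
proof -
  have "1 \<le> \<eta> * M"
    using hd_in_set[OF \<open>xs \<noteq> []\<close>] assms(2,3) eta_mult_ge_one[of "hd xs" M] by auto
  then have "(\<eta> * M) ^ length xs \<le> (\<eta> * M) ^ k"
    using assms(4) by (rule power_increasing[rotated])
  with norm_mat_list_prod_le[OF assms(1-3)] show ?thesis
    by linarith
qed

lemma word_trivial_mod_p_norm_bound:
  assumes "1 < p" and us: "set us \<subseteq> SL2Z"
    and M: "\<forall>x\<in>set us. N (to_real_mat x) \<le> M \<and> N (to_real_mat (sl2_inv x)) \<le> M"
    and nontrivial: "mat_list_prod us \<noteq> mat 1" and trivial_mod_p: "red_p p (mat_list_prod us) = mat 1"
    and k: "length us \<le> 2 * k" "k \<le> length us"
  shows "\<eta> * real_of_int p / 2 \<le> (\<eta> * M) ^ k"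
proof -
  have "us \<noteq> []"
    using nontrivial by (auto simp: mat_list_prod_def)
  then have "0 < k"
    using k(1) by (cases us) auto
  define A where "A = mat_list_prod (take k us)"
  define C where "C = mat_list_prod (drop k us)"
  have "C \<in> SL2Z"
    unfolding C_def using us by (intro mat_list_prod_SL2Z) (meson order_trans set_drop_subset)
  have AC: "mat_list_prod us = A ** C"
    unfolding A_def C_def by (metis append_take_drop_id mat_list_prod_append)
  have "A \<noteq> sl2_inv C"
    using nontrivial \<open>C \<in> SL2Z\<close> by (auto simp: AC sl2_inv_left)
  moreover have "red_p p A = red_p p (sl2_inv C)"
    using trivial_mod_p \<open>C \<in> SL2Z\<close> \<open>1 < p\<close> by (intro red_p_eq_sl2_inv_if_mult_trivial) (simp add: AC)
  ultimately obtain i j where ij: "p \<le> \<bar>A$i$j\<bar> + \<bar>sl2_inv C $i$j\<bar>"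
    using \<open>1 < p\<close> by (auto elim: congruent_distinct_entry_ge)
  have A_bound: "\<eta> * N (to_real_mat A) \<le> (\<eta> * M) ^ k"
    unfolding A_def using \<open>us \<noteq> []\<close> \<open>0 < k\<close> k us M
    by (intro norm_mat_list_prod_le_power) (auto dest: in_set_takeD)
  consider "drop k us = []" | "drop k us \<noteq> []"
    by blast
  then have "\<eta> * real_of_int p \<le> 2 * (\<eta> * M) ^ k"
  proof cases
    case 1
    \<comment> \<open>\<open>C\<^sup>-\<^sup>1 = 1\<close> has no large entry, so \<open>A\<close> has one of size \<open>p - 1 \<ge> p/2\<close>.\<close>
    then have "\<bar>sl2_inv C $i$j\<bar> \<le> 1"
      by (simp add: C_def mat_list_prod_def) (simp add: mat_def)
    then have "real_of_int p \<le> 2 * N (to_real_mat A)"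
      using ij \<open>1 < p\<close> int_entry_le_norm[of A i j] by linarith
    then have "\<eta> * real_of_int p \<le> 2 * (\<eta> * N (to_real_mat A))"
      using eta_pos by (simp add: mult_left_mono)
    with A_bound show ?thesis
      by linarith
  next
    case 2
    have "sl2_inv C = mat_list_prod (rev (map sl2_inv (drop k us)))"
      by (simp add: C_def sl2_inv_mat_list_prod)
    then have "\<eta> * N (to_real_mat (sl2_inv C)) \<le> (\<eta> * M) ^ k"
      using 2 k us M
      by (auto intro!: norm_mat_list_prod_le_power SL2Z_sl2_inv dest!: in_set_dropD)
    moreover have "real_of_int p \<le> N (to_real_mat A) + N (to_real_mat (sl2_inv C))"
      using ij int_entry_le_norm[of A i j] int_entry_le_norm[of "sl2_inv C" i j] by linarith
    then have "\<eta> * real_of_int p \<le> \<eta> * N (to_real_mat A) + \<eta> * N (to_real_mat (sl2_inv C))"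
      using eta_pos by (simp add: mult_left_mono flip: distrib_left)
    ultimately show ?thesis
      using A_bound by linarith
  qed
  then show ?thesis
    by simp
qed

end

lemma sl2_norm_Sup_ratio:
  assumes entry_le: "\<And>X i j. \<bar>X$i$j\<bar> \<le> N X"
    and bdd: "bdd_above {N (to_real_mat (G ** H)) / (N (to_real_mat G) * N (to_real_mat H)) | G H.
                     G \<in> SL2Z \<and> H \<in> SL2Z}"
  shows "sl2_norm N (Sup {N (to_real_mat (G ** H)) / (N (to_real_mat G) * N (to_real_mat H)) | G H.
                     G \<in> SL2Z \<and> H \<in> SL2Z})"
    (is "sl2_norm N (Sup ?R)")
proof
  fix G H :: "int^2^2"
  assume "G \<in> SL2Z" "H \<in> SL2Z"
  then have "N (to_real_mat (G ** H)) / (N (to_real_mat G) * N (to_real_mat H)) \<le> Sup ?R"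
    using bdd by (intro cSup_upper) auto
  moreover have "0 < N (to_real_mat G) * N (to_real_mat H)"
    using norm_SL2Z_ge_one[OF entry_le] \<open>G \<in> SL2Z\<close> \<open>H \<in> SL2Z\<close>
    by (smt (verit) mult_pos_pos)
  ultimately show "N (to_real_mat (G ** H)) \<le> Sup ?R * N (to_real_mat G) * N (to_real_mat H)"
    by (simp add: pos_divide_le_eq mult.assoc)
qed (rule entry_le)

lemma ceiling_half_bounds:
  shows "n \<le> 2 * nat \<lceil>real n / 2\<rceil>" and "nat \<lceil>real n / 2\<rceil> \<le> n"
proof -
  have "- (- int n div 2) = int ((n + 1) div 2)"
    by presburger
  then have "nat \<lceil>real n / 2\<rceil> = (n + 1) div 2"
    using ceiling_divide_eq_div[where 'a = real, of "int n" 2] by simp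
  then show "n \<le> 2 * nat \<lceil>real n / 2\<rceil>" "nat \<lceil>real n / 2\<rceil> \<le> n"
    by simp_all
qed

theorem lemma2p4:
  fixes d :: nat and s :: "nat \<Rightarrow> int^2^2" and p :: int and N :: "real^2^2 \<Rightarrow> real"
    and g :: nat
  assumes "free_basis d s"
    and "prime p"
    and "inj_on (red_p p) (sym_gens d s)"
    and "is_norm N"
    and "\<forall>X i j. N X \<ge> \<bar>X$i$j\<bar>"
    and "bdd_above {N (to_real_mat (G ** H)) / (N (to_real_mat G) * N (to_real_mat H)) | G H.
                     G \<in> SL2Z \<and> H \<in> SL2Z}"
    and "is_cay_girth p (red_p p ` sym_gens d s) g"
  shows "(let \<eta> = Sup {N (to_real_mat (G ** H)) / (N (to_real_mat G) * N (to_real_mat H)) | G H.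
                         G \<in> SL2Z \<and> H \<in> SL2Z};
              M = Max (N ` to_real_mat ` sym_gens d s)
          in (\<eta> * M) ^ nat \<lceil>real g / 2\<rceil> \<ge> \<eta> * real_of_int p / 2)"
proof -
  \<comment> \<open>Neither \<open>is_norm N\<close> nor the injectivity of \<open>red_p p\<close> on the generators is needed:
    only the entry bound on \<open>N\<close> is used, and a walk of length 1 is handled like any other.\<close>
  define \<eta> where "\<eta> = Sup {N (to_real_mat (G ** H)) / (N (to_real_mat G) * N (to_real_mat H)) | G H.
                         G \<in> SL2Z \<and> H \<in> SL2Z}"
  define M where "M = Max (N ` to_real_mat ` sym_gens d s)"
  interpret sl2_norm N \<eta>
    unfolding \<eta>_def using assms(5,6) by (intro sl2_norm_Sup_ratio) auto
  have "1 < p"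
    using assms(2) prime_gt_1_int by blast
  obtain us where "length us = g" and us: "set us \<subseteq> sym_gens d s"
    and nontrivial: "mat_list_prod us \<noteq> mat 1" and trivial_mod_p: "red_p p (mat_list_prod us) = mat 1"
    using assms(7) cay_cycle_lift[OF assms(1) \<open>1 < p\<close>] unfolding is_cay_girth_def by metis
  have "\<forall>x\<in>set us. N (to_real_mat x) \<le> M \<and> N (to_real_mat (sl2_inv x)) \<le> M"
    using us sl2_inv_in_sym_gens finite_sym_gens by (auto simp: M_def intro!: Max_ge)
  moreover have "set us \<subseteq> SL2Z"
    using us sym_gens_subset_SL2Z[OF assms(1)] by blast
  ultimately have "\<eta> * real_of_int p / 2 \<le> (\<eta> * M) ^ nat \<lceil>real g / 2\<rceil>"
    using ceiling_half_bounds[of g] \<open>length us = g\<close>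
    by (intro word_trivial_mod_p_norm_bound[OF \<open>1 < p\<close> _ _ nontrivial trivial_mod_p]) simp_all
  then show ?thesis
    by (simp add: Let_def \<eta>_def M_def)
qed

end
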